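(* Let $\{c_k\}_{k\ge1}$ be i.i.d. random variables whose common distribution is absolutely continuous on $[0,1]$ with almost everywhere positive and uniformly bounded density, let $\lambda>0$ and $l_k=e^{-\lambda k}$, and let $q(n)=\lfloor\log_2(\log n)\rfloor$. Then almost surely the following holds: for every $\varepsilon>0$, for all sufficiently large $n$ and all $i\ne j$ in $\mathcal{A}_{n,q(n)}$, $\frac{l_i+l_j}{2|c_i-c_j|}<\varepsilon$.
   Context: $\mathcal{A}_n=\{n,\dots,2n-1\}$ and $\mathcal{A}_{n,q}=\mathcal{A}_n\cup\mathcal{A}_{2n}\cup\cdots\cup\mathcal{A}_{2^qn}$. *)

theory Defs
  imports "HOL-Probability.Probability"
begin

definition blockA :: "nat \<Rightarrow> nat set" where
  "blockA n = {n..<2*n}"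

definition blockAq :: "nat \<Rightarrow> nat \<Rightarrow> nat set" where
  "blockAq n q = (\<Union>m\<in>{0..q}. blockA (2^m * n))"

definition qfun :: "nat \<Rightarrow> nat" where
  "qfun n = nat \<lfloor>log 2 (ln (real n))\<rfloor>"

end

theory Submission
  imports Defs "HOL-Real_Asymp.Real_Asymp"
begin

text \<open>
  Put d i = exp (- lam i / 2), so that l i = (d i)^2. An independent point with density
  bounded by B lands within distance d of a given point with probability at most 2 B d, so
  c i is d i-close to one of c (i+1), ..., c (2 i^2) with probability O(i^2 d i), which is
  summable. By Borel-Cantelli, almost surely for all large i and all i < j \<le> 2 i^2 we
  have \<bar>c i - c j\<bar> \<ge> d i. Since 2^q(n) \<le> ln n < n, the set A_{n,q(n)} lies in [n, 2 n^2),
  so every pair i < j in it is covered and (l i + l j) / (2 \<bar>c i - c j\<bar>) < d i \<le> d n,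
  which tends to 0.
\<close>

lemma summable_square_times_exp:
  fixes a :: real
  assumes "a > 0"
  shows "summable (\<lambda>n. real n ^ 2 * exp (- a * real n))"
proof (rule summable_comparison_test_bigo)
  show "summable (\<lambda>n. norm (1 / real n ^ 2))"
    using inverse_power_summable[of 2, where 'a=real] by (simp add: divide_inverse)
  show "(\<lambda>n. real n ^ 2 * exp (- a * real n)) \<in> O(\<lambda>n. 1 / real n ^ 2)"
    using assms by real_asymp
qed

lemma (in prob_space) indep_vars_imp_indep_var:
  assumes "indep_vars M' X I" "i \<in> I" "j \<in> I" "i \<noteq> j"
  shows "indep_var (M' i) (X i) (M' j) (X j)"
proof -
  have "indep_var (M' i) ((\<lambda>f. f i) \<circ> (\<lambda>\<omega>. restrict (\<lambda>i. X i \<omega>) {i}))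
                  (M' j) ((\<lambda>f. f j) \<circ> (\<lambda>\<omega>. restrict (\<lambda>i. X i \<omega>) {j}))"
    using assms by (intro indep_var_compose[OF indep_var_restrict[OF assms(1)]]) auto
  also have "(\<lambda>f. f i) \<circ> (\<lambda>\<omega>. restrict (\<lambda>i. X i \<omega>) {i}) = X i" by auto
  also have "(\<lambda>f. f j) \<circ> (\<lambda>\<omega>. restrict (\<lambda>i. X i \<omega>) {j}) = X j" by auto
  finally show ?thesis .
qed

lemma (in prob_space) prob_abs_diff_less_le:
  fixes X Y :: "'a \<Rightarrow> real" and B d :: real
  assumes ind: "indep_var borel X borel Y"
    and Y: "distributed M lborel Y (\<lambda>x. ennreal (g x))"
    and g_le: "\<And>x. g x \<le> B" and g_nonneg: "\<And>x. g x \<ge> 0" and "d > 0"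
  shows "prob {\<omega> \<in> space M. \<bar>X \<omega> - Y \<omega>\<bar> < d} \<le> 2 * B * d"
proof -
  have [measurable]: "X \<in> borel_measurable M" "Y \<in> borel_measurable M"
    using indep_var_rv1[OF ind] indep_var_rv2[OF ind] by simp_all
  have [measurable]: "(\<lambda>x. ennreal (g x)) \<in> borel_measurable lborel"
    using Y by (simp add: distributed_def)
  have "B \<ge> 0" using g_le[of 0] g_nonneg[of 0] by simp
  define D where "D = {p \<in> space (borel \<Otimes>\<^sub>M borel). \<bar>fst p - snd p\<bar> < d}"
  have D: "D \<in> sets (borel \<Otimes>\<^sub>M borel)" unfolding D_def by measurable
  let ?MX = "distr M borel X" and ?MY = "distr M borel Y"
  interpret MX: prob_space ?MX by (rule prob_space_distr) simp
  interpret MY: prob_space ?MY by (rule prob_space_distr) simp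
  have section_bound: "emeasure ?MY (Pair x -` D) \<le> ennreal (2 * B * d)" for x
  proof -
    have "Pair x -` D = {x - d <..< x + d}"
      by (auto simp: D_def space_pair_measure abs_less_iff)
    then have "emeasure ?MY (Pair x -` D) = emeasure (distr M lborel Y) {x - d <..< x + d}"
      by (simp add: emeasure_distr)
    also have "\<dots> = emeasure (density lborel (\<lambda>x. ennreal (g x))) {x - d <..< x + d}"
      using distributed_distr_eq_density[OF Y] by simp
    also have "\<dots> = (\<integral>\<^sup>+ y. ennreal (g y) * indicator {x - d <..< x + d} y \<partial>lborel)"
      by (rule emeasure_density) auto
    also have "\<dots> \<le> (\<integral>\<^sup>+ y. ennreal B * indicator {x - d <..< x + d} y \<partial>lborel)"
      by (intro nn_integral_mono) (auto simp: indicator_def g_le intro!: ennreal_leI)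
    also have "\<dots> = ennreal B * ennreal (2 * d)"
      using \<open>d > 0\<close> by (subst nn_integral_cmult_indicator) auto
    also have "\<dots> = ennreal (2 * B * d)"
      using \<open>d > 0\<close> \<open>B \<ge> 0\<close> by (simp add: ennreal_mult[symmetric] mult_ac)
    finally show ?thesis .
  qed
  have "{\<omega> \<in> space M. \<bar>X \<omega> - Y \<omega>\<bar> < d} = (\<lambda>\<omega>. (X \<omega>, Y \<omega>)) -` D \<inter> space M"
    by (auto simp: D_def space_pair_measure)
  then have "emeasure M {\<omega> \<in> space M. \<bar>X \<omega> - Y \<omega>\<bar> < d}
      = emeasure (distr M (borel \<Otimes>\<^sub>M borel) (\<lambda>\<omega>. (X \<omega>, Y \<omega>))) D"
    using D by (simp add: emeasure_distr)
  also have "\<dots> = emeasure (?MX \<Otimes>\<^sub>M ?MY) D"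
    using ind by (simp add: indep_var_distribution_eq)
  also have "\<dots> = (\<integral>\<^sup>+x. emeasure ?MY (Pair x -` D) \<partial>?MX)"
    by (rule MY.emeasure_pair_measure_alt) (use D in simp)
  also have "\<dots> \<le> (\<integral>\<^sup>+x. ennreal (2 * B * d) \<partial>?MX)"
    by (intro nn_integral_mono section_bound)
  also have "\<dots> = ennreal (2 * B * d)"
    using MX.emeasure_space_1 by simp
  finally show ?thesis
    using \<open>d > 0\<close> \<open>B \<ge> 0\<close> by (simp add: emeasure_eq_measure)
qed

lemma (in prob_space) prob_close_to_some_le:
  fixes X :: "'i \<Rightarrow> 'a \<Rightarrow> real" and B d :: real
  assumes indep: "indep_vars (\<lambda>_. borel) X I" and "i \<in> I" "J \<subseteq> I - {i}" "finite J"
    and distr: "\<And>j. j \<in> J \<Longrightarrow> distributed M lborel (X j) (\<lambda>x. ennreal (g x))"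
    and g_le: "\<And>x. g x \<le> B" and g_nonneg: "\<And>x. g x \<ge> 0" and "d > 0"
  shows "prob (\<Union>j\<in>J. {\<omega> \<in> space M. \<bar>X i \<omega> - X j \<omega>\<bar> < d}) \<le> card J * (2 * B * d)"
proof -
  have [measurable]: "X k \<in> borel_measurable M" if "k \<in> I" for k
    using indep that by (simp add: indep_vars_def)
  have "prob (\<Union>j\<in>J. {\<omega> \<in> space M. \<bar>X i \<omega> - X j \<omega>\<bar> < d})
      \<le> (\<Sum>j\<in>J. prob {\<omega> \<in> space M. \<bar>X i \<omega> - X j \<omega>\<bar> < d})"
    using \<open>finite J\<close> \<open>i \<in> I\<close> \<open>J \<subseteq> I - {i}\<close> by (intro measure_UNION_le) auto
  also have "\<dots> \<le> (\<Sum>j\<in>J. 2 * B * d)"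
  proof (rule sum_mono)
    fix j assume "j \<in> J"
    then have "indep_var borel (X i) borel (X j)"
      using assms(2,3) by (intro indep_vars_imp_indep_var[OF indep]) auto
    then show "prob {\<omega> \<in> space M. \<bar>X i \<omega> - X j \<omega>\<bar> < d} \<le> 2 * B * d"
      using \<open>j \<in> J\<close> \<open>d > 0\<close> by (intro prob_abs_diff_less_le[OF _ distr g_le g_nonneg])
  qed
  finally show ?thesis by (simp only: sum_constant)
qed

lemma (in prob_space) AE_eventually_separated:
  fixes X :: "nat \<Rightarrow> 'a \<Rightarrow> real" and w :: "nat \<Rightarrow> nat" and d :: "nat \<Rightarrow> real" and B :: real
  assumes indep: "indep_vars (\<lambda>_. borel) X {1..}"
    and distr: "\<And>k. k \<ge> 1 \<Longrightarrow> distributed M lborel (X k) (\<lambda>x. ennreal (g x))"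
    and g_le: "\<And>x. g x \<le> B" and g_nonneg: "\<And>x. g x \<ge> 0"
    and d_pos: "\<And>i. d i > 0" and summable: "summable (\<lambda>i. real (w i) * d i)"
  shows "AE \<omega> in M. \<forall>\<^sub>F i in sequentially. \<forall>j\<in>{i<..w i}. d i \<le> \<bar>X i \<omega> - X j \<omega>\<bar>"
proof -
  \<comment> \<open>Shifted by one since \<open>X 0\<close> is not part of the independent family.\<close>
  define F where "F i = (\<Union>j\<in>{Suc i<..w (Suc i)}.
    {\<omega> \<in> space M. \<bar>X (Suc i) \<omega> - X j \<omega>\<bar> < d (Suc i)})" for i
  have [measurable]: "X k \<in> borel_measurable M" if "k \<ge> 1" for k
    using indep that by (simp add: indep_vars_def)
  have F_sets: "F i \<in> sets M" for i
    unfolding F_def by (intro sets.finite_UN) auto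
  have "B \<ge> 0" using g_le[of 0] g_nonneg[of 0] by simp
  have bound_summable: "summable (\<lambda>i. real (w (Suc i)) * (2 * B * d (Suc i)))"
    using summable_mult2[OF summable, of "2 * B"] by (subst summable_Suc_iff) (simp add: mult_ac)
  have prob_F_le: "prob (F i) \<le> real (w (Suc i)) * (2 * B * d (Suc i))" for i
  proof -
    have "prob (F i) \<le> card {Suc i<..w (Suc i)} * (2 * B * d (Suc i))"
      unfolding F_def using d_pos
      by (intro prob_close_to_some_le[OF indep _ _ _ distr g_le g_nonneg]) auto
    also have "\<dots> \<le> real (w (Suc i)) * (2 * B * d (Suc i))"
      using \<open>B \<ge> 0\<close> d_pos[of "Suc i"] by (intro mult_right_mono) auto
    finally show ?thesis .
  qed
  have "summable (\<lambda>i. prob (F i))"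
    by (rule summable_comparison_test'[OF bound_summable]) (simp add: prob_F_le)
  then have "AE \<omega> in M. \<forall>\<^sub>F i in sequentially. \<omega> \<in> space M - F i"
    using F_sets by (intro borel_cantelli_AE1) (auto simp: less_top[symmetric])
  then show ?thesis
  proof (rule eventually_mono)
    fix \<omega> assume "\<forall>\<^sub>F i in sequentially. \<omega> \<in> space M - F i"
    then have "\<forall>\<^sub>F i in sequentially. \<forall>j\<in>{Suc i<..w (Suc i)}.
        d (Suc i) \<le> \<bar>X (Suc i) \<omega> - X j \<omega>\<bar>"
      by (rule eventually_mono) (force simp: F_def)
    then show "\<forall>\<^sub>F i in sequentially. \<forall>j\<in>{i<..w i}. d i \<le> \<bar>X i \<omega> - X j \<omega>\<bar>"
      by (rule eventually_sequentially_Suc[THEN iffD1])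
  qed
qed

lemma blockAq_subset: "blockAq n q \<subseteq> {n..<2 ^ Suc q * n}"
proof
  fix k assume "k \<in> blockAq n q"
  then obtain m where "m \<le> q" "2 ^ m * n \<le> k" "k < 2 * (2 ^ m * n)"
    by (auto simp: blockAq_def blockA_def)
  moreover have "n \<le> 2 ^ m * n" by simp
  moreover have "2 ^ m * n \<le> 2 ^ q * n"
    using \<open>m \<le> q\<close> by (intro mult_le_mono1 power_increasing) auto
  ultimately have "n \<le> k" "k < 2 * (2 ^ q * n)" by linarith+
  then show "k \<in> {n..<2 ^ Suc q * n}" by (simp add: mult.assoc)
qed

lemma two_pow_qfun_le_ln:
  assumes "ln (real n) \<ge> 1"
  shows "real (2 ^ qfun n) \<le> ln (real n)"
proof -
  have "log 2 (ln (real n)) \<ge> 0" using assms by simp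
  then have "real (2 ^ qfun n) \<le> 2 powr log 2 (ln (real n))"
    unfolding qfun_def by (simp add: powr_realpow[symmetric])
  also have "\<dots> = ln (real n)" using assms by simp
  finally show ?thesis .
qed

lemma blockAq_qfun_subset:
  assumes "n \<ge> 3"
  shows "blockAq n (qfun n) \<subseteq> {n..<2 * n ^ 2}"
proof -
  have "exp 1 \<le> real n" using exp_le assms by linarith
  then have "ln (real n) \<ge> 1" using assms by (simp add: ln_ge_iff)
  then have "real (2 ^ qfun n) \<le> ln (real n)" by (rule two_pow_qfun_le_ln)
  moreover have "ln (real n) < real n" using assms by (intro ln_less_self) auto
  ultimately have "real (2 ^ qfun n) < real n" by linarith
  then have "2 ^ Suc (qfun n) * n \<le> 2 * n ^ 2"
    by (simp add: power2_eq_square)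
  then show ?thesis using blockAq_subset by fastforce
qed

lemma eventually_pairs_separated:
  fixes x :: "nat \<Rightarrow> real" and S :: "nat \<Rightarrow> nat set" and lam \<epsilon> :: real
  assumes "lam > 0" "\<epsilon> > 0"
    and sep: "\<forall>\<^sub>F i in sequentially. \<forall>j\<in>{i<..2 * i ^ 2}. exp (- (lam / 2) * real i) \<le> \<bar>x i - x j\<bar>"
    and window: "\<forall>\<^sub>F n in sequentially. S n \<subseteq> {n..<2 * n ^ 2}"
  shows "\<forall>\<^sub>F n in sequentially. \<forall>i\<in>S n. \<forall>j\<in>S n. i \<noteq> j \<longrightarrow>
           exp (- lam * real i) + exp (- lam * real j) < \<epsilon> * (2 * \<bar>x i - x j\<bar>)"
proof -
  define d where "d i = exp (- (lam / 2) * real i)" for i :: nat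
  from sep obtain N where "\<forall>i\<ge>N. \<forall>j\<in>{i<..2 * i ^ 2}. d i \<le> \<bar>x i - x j\<bar>"
    unfolding eventually_sequentially d_def by blast
  then have N: "\<And>i j. N \<le> i \<Longrightarrow> i < j \<Longrightarrow> j \<le> 2 * i ^ 2 \<Longrightarrow> d i \<le> \<bar>x i - x j\<bar>"
    by simp
  have "d \<longlonglongrightarrow> 0" unfolding d_def using \<open>lam > 0\<close> by real_asymp
  then have small: "\<forall>\<^sub>F n in sequentially. d n < \<epsilon>"
    using \<open>\<epsilon> > 0\<close> by (rule order_tendstoD)
  have pair: "exp (- lam * real i) + exp (- lam * real j) < \<epsilon> * (2 * \<bar>x i - x j\<bar>)"
    if "N \<le> n" "d n < \<epsilon>" "n \<le> i" "i < j" "j < 2 * n ^ 2" for n i j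
  proof -
    have "n ^ 2 \<le> i ^ 2" using \<open>n \<le> i\<close> by (simp add: power_mono)
    then have "j \<le> 2 * i ^ 2" using \<open>j < 2 * n ^ 2\<close> by linarith
    then have "d i \<le> \<bar>x i - x j\<bar>" using N that by auto
    moreover have "d i \<le> d n" unfolding d_def using \<open>n \<le> i\<close> \<open>lam > 0\<close> by simp
    moreover have "exp (- lam * real i) = d i * d i"
      unfolding d_def by (simp add: exp_add[symmetric])
    moreover have "exp (- lam * real j) < exp (- lam * real i)"
      using \<open>i < j\<close> \<open>lam > 0\<close> by simp
    moreover have "d i > 0" by (simp add: d_def)
    ultimately have "exp (- lam * real i) + exp (- lam * real j) < 2 * (d i * d i)"
      and "d i * d i \<le> \<epsilon> * \<bar>x i - x j\<bar>"
      using \<open>d n < \<epsilon>\<close> \<open>\<epsilon> > 0\<close> by (auto intro!: mult_mono)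
    then show ?thesis by linarith
  qed
  show ?thesis
    using window small eventually_ge_at_top[of N]
  proof eventually_elim
    case (elim n)
    show ?case
    proof (intro ballI impI)
      fix i j assume "i \<in> S n" "j \<in> S n" "i \<noteq> j"
      then consider "n \<le> i" "i < j" "j < 2 * n ^ 2" | "n \<le> j" "j < i" "i < 2 * n ^ 2"
        using elim(1) by fastforce
      then show "exp (- lam * real i) + exp (- lam * real j) < \<epsilon> * (2 * \<bar>x i - x j\<bar>)"
        using pair[of n i j] pair[of n j i] elim
        by cases (auto simp: abs_minus_commute add.commute)
    qed
  qed
qed

theorem lemma2p2:
  fixes M :: "'a measure" and c :: "nat \<Rightarrow> 'a \<Rightarrow> real"
    and g :: "real \<Rightarrow> real" and lam :: real and l :: "nat \<Rightarrow> real"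
  assumes "prob_space M"
    and "prob_space.indep_vars M (\<lambda>_. borel) c {1..}"
    and "g \<in> borel_measurable borel"
    and "\<And>x. g x \<ge> 0"
    and "\<And>x. x \<notin> {0..1} \<Longrightarrow> g x = 0"
    and "AE x in lborel. x \<in> {0..1} \<longrightarrow> g x > 0"
    and "\<exists>B. \<forall>x. g x \<le> B"
    and "\<And>k. k \<ge> 1 \<Longrightarrow> distributed M lborel (c k) (\<lambda>x. ennreal (g x))"
    and "lam > 0"
    and "\<And>k. l k = exp (- lam * real k)"
  shows "AE \<omega> in M. \<forall>\<epsilon>>0. eventually (\<lambda>n. \<forall>i\<in>blockAq n (qfun n). \<forall>j\<in>blockAq n (qfun n).
            i \<noteq> j \<longrightarrow> l i + l j < \<epsilon> * (2 * \<bar>c i \<omega> - c j \<omega>\<bar>)) sequentially"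
proof -
  interpret prob_space M by fact
  obtain B where g_le: "\<And>x. g x \<le> B" using assms(7) by blast
  have "summable (\<lambda>i. real (2 * i ^ 2) * exp (- (lam / 2) * real i))"
    using summable_mult[OF summable_square_times_exp[of "lam / 2"], of 2] \<open>lam > 0\<close>
    by (simp add: mult_ac)
  then have sep: "AE \<omega> in M. \<forall>\<^sub>F i in sequentially.
      \<forall>j\<in>{i<..2 * i ^ 2}. exp (- (lam / 2) * real i) \<le> \<bar>c i \<omega> - c j \<omega>\<bar>"
    by (intro AE_eventually_separated[OF assms(2) assms(8) g_le assms(4)]) auto
  have window: "\<forall>\<^sub>F n in sequentially. blockAq n (qfun n) \<subseteq> {n..<2 * n ^ 2}"
    using eventually_ge_at_top[of 3] by eventually_elim (rule blockAq_qfun_subset)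
  have l: "l = (\<lambda>k. exp (- lam * real k))" using assms(10) by blast
  from sep show ?thesis
  proof (rule eventually_mono)
    fix \<omega> assume sep_\<omega>: "\<forall>\<^sub>F i in sequentially.
        \<forall>j\<in>{i<..2 * i ^ 2}. exp (- (lam / 2) * real i) \<le> \<bar>c i \<omega> - c j \<omega>\<bar>"
    show "\<forall>\<epsilon>>0. \<forall>\<^sub>F n in sequentially. \<forall>i\<in>blockAq n (qfun n). \<forall>j\<in>blockAq n (qfun n).
        i \<noteq> j \<longrightarrow> l i + l j < \<epsilon> * (2 * \<bar>c i \<omega> - c j \<omega>\<bar>)"
      unfolding l using eventually_pairs_separated[OF \<open>lam > 0\<close> _ sep_\<omega> window] by blast
  qed
qed

end
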